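(* For every $T\ge1$ and every deterministic online algorithm that posts in each round a two-price mechanism $(p_t,q_t)$ with $p_t\le q_t$, there exists an instance with three sellers and three buyers (costs and values in $[0,1]$) on which the algorithm's cumulative gains-from-trade regret over $T$ rounds is at least $T/4$; in particular it is $\Omega(T)$.
   Context: Two-sided market model: sellers have fixed unknown costs $c_i\in[0,1]$, buyers fixed unknown values $v_j\in[0,1]$. In each round the learner posts prices and observes every trader's accept/reject decision; a seller accepts a price $p$ iff $p\ge c_i$, a buyer accepts a price $q$ iff $q\le v_j$ (ties in favour of accepting). A maximum-cardinality matching between accepting sellers and accepting buyers is formed; the GFT of a matching $M$ is $\sum_{(i,j)\in M}(v_j-c_i)$. Benchmark: $\mathrm{GFT}^\star$, the maximum GFT over all matchings. Round-$t$ regret is $\mathrm{GFT}^\star$ minus the minimum GFT over all maximum-cardinality matchings of the traders accepting in round $t$; cumulative regret is the sum over rounds. A two-price mechanism posts a price $p$ to all sellers and a price $q$ to all buyers, with weak budget balance $p\le q$. *)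

theory Defs
  imports Main "HOL.Real"
begin

text \<open>Sellers are indexed by positions of the cost list cs, buyers by positions of
the value list vs. A matching between seller set S and buyer set B is a set of
pairs (i,j) in S x B in which each seller and each buyer occurs at most once.\<close>

definition is_matching :: "nat set \<Rightarrow> nat set \<Rightarrow> (nat \<times> nat) set \<Rightarrow> bool" where
  "is_matching S B M \<longleftrightarrow> M \<subseteq> S \<times> B \<and>
     (\<forall>(i,j)\<in>M. \<forall>(i',j')\<in>M. (i = i' \<longleftrightarrow> j = j'))"

definition gft :: "real list \<Rightarrow> real list \<Rightarrow> (nat \<times> nat) set \<Rightarrow> real" where
  "gft cs vs M = (\<Sum>(i,j)\<in>M. vs ! j - cs ! i)"

definition opt_gft :: "real list \<Rightarrow> real list \<Rightarrow> real" where
  "opt_gft cs vs = Max (gft cs vs ` {M. is_matching {..<length cs} {..<length vs} M})"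

definition max_card_matchings :: "nat set \<Rightarrow> nat set \<Rightarrow> (nat \<times> nat) set set" where
  "max_card_matchings S B = {M. is_matching S B M \<and>
      (\<forall>M'. is_matching S B M' \<longrightarrow> card M' \<le> card M)}"

definition accepting_sellers :: "real list \<Rightarrow> real \<Rightarrow> nat set" where
  "accepting_sellers cs p = {i. i < length cs \<and> cs ! i \<le> p}"

definition accepting_buyers :: "real list \<Rightarrow> real \<Rightarrow> nat set" where
  "accepting_buyers vs q = {j. j < length vs \<and> q \<le> vs ! j}"

definition round_gft :: "real list \<Rightarrow> real list \<Rightarrow> real \<Rightarrow> real \<Rightarrow> real" where
  "round_gft cs vs p q = Min (gft cs vs `
      max_card_matchings (accepting_sellers cs p) (accepting_buyers vs q))"

definition round_regret :: "real list \<Rightarrow> real list \<Rightarrow> real \<Rightarrow> real \<Rightarrow> real" where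
  "round_regret cs vs p q = opt_gft cs vs - round_gft cs vs p q"

type_synonym feedback = "bool list \<times> bool list"

definition feedback_of :: "real list \<Rightarrow> real list \<Rightarrow> real \<times> real \<Rightarrow> feedback" where
  "feedback_of cs vs pq = (map (\<lambda>c. c \<le> fst pq) cs, map (\<lambda>v. snd pq \<le> v) vs)"

type_synonym algorithm = "feedback list \<Rightarrow> real \<times> real"

fun history :: "algorithm \<Rightarrow> real list \<Rightarrow> real list \<Rightarrow> nat \<Rightarrow> feedback list" where
  "history A cs vs 0 = []"
| "history A cs vs (Suc t) = history A cs vs t @ [feedback_of cs vs (A (history A cs vs t))]"

definition prices :: "algorithm \<Rightarrow> real list \<Rightarrow> real list \<Rightarrow> nat \<Rightarrow> real \<times> real" where
  "prices A cs vs t = A (history A cs vs t)"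

definition cumulative_regret :: "algorithm \<Rightarrow> real list \<Rightarrow> real list \<Rightarrow> nat \<Rightarrow> real" where
  "cumulative_regret A cs vs T =
     (\<Sum>t<T. round_regret cs vs (fst (prices A cs vs t)) (snd (prices A cs vs t)))"

end

(* One instance defeats every algorithm, so feedback is useless. With costs (0, 0, 1) and
   values (1/2, 1/2, 1) the optimum 3/2 pairs one free seller with the value-1 buyer and the
   other with a value-1/2 buyer. A single price pair p <= q cannot realise this in the worst
   case: if q <= 1/2 a maximum matching may give both free sellers to the value-1/2 buyers
   (GFT 1); if q > 1/2 only the value-1 buyer accepts (GFT at most 1). Every round therefore
   loses at least 1/2. *)

theory Submission
  imports Defs
begin

lemma is_matching_card_le:
  assumes "is_matching S B M" "finite S" "finite B"
  shows "card M \<le> card S" and "card M \<le> card B"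
proof -
  have sub: "M \<subseteq> S \<times> B" and inj: "inj_on fst M" "inj_on snd M"
    using assms(1) unfolding is_matching_def inj_on_def by fastforce+
  show "card M \<le> card S" using card_inj_on_le[OF inj(1) _ assms(2)] sub by fastforce
  show "card M \<le> card B" using card_inj_on_le[OF inj(2) _ assms(3)] sub by fastforce
qed

lemma finite_matchings:
  assumes "finite S" "finite B"
  shows "finite {M. is_matching S B M}"
proof (rule finite_subset)
  show "{M. is_matching S B M} \<subseteq> Pow (S \<times> B)" unfolding is_matching_def by auto
qed (use assms in simp)

lemma gft_le_opt_gft:
  assumes "is_matching {..<length cs} {..<length vs} M"
  shows "gft cs vs M \<le> opt_gft cs vs"
  unfolding opt_gft_def using assms finite_matchings[of "{..<length cs}" "{..<length vs}"]
  by (intro Max_ge) auto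

lemma finite_accepting_sellers: "finite (accepting_sellers cs p)"
  unfolding accepting_sellers_def by simp

lemma finite_accepting_buyers: "finite (accepting_buyers vs q)"
  unfolding accepting_buyers_def by simp

text \<open>Saturating one side certifies maximum cardinality.\<close>

lemma round_gft_le_gft:
  assumes "is_matching (accepting_sellers cs p) (accepting_buyers vs q) M"
    and "card (accepting_sellers cs p) \<le> card M \<or> card (accepting_buyers vs q) \<le> card M"
  shows "round_gft cs vs p q \<le> gft cs vs M"
proof -
  let ?S = "accepting_sellers cs p" and ?B = "accepting_buyers vs q"
  have fin: "finite ?S" "finite ?B"
    by (simp_all add: finite_accepting_sellers finite_accepting_buyers)
  have "M \<in> max_card_matchings ?S ?B"
    unfolding max_card_matchings_def using assms is_matching_card_le[OF _ fin] by fastforce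
  moreover have "finite (max_card_matchings ?S ?B)"
    using finite_matchings[OF fin] unfolding max_card_matchings_def
    by (rule finite_subset[rotated]) auto
  ultimately show ?thesis unfolding round_gft_def by (intro Min_le) auto
qed

lemma round_gft_le_0_if_no_trader:
  assumes "accepting_sellers cs p = {} \<or> accepting_buyers vs q = {}"
  shows "round_gft cs vs p q \<le> 0"
proof -
  have "round_gft cs vs p q \<le> gft cs vs {}"
    using assms by (intro round_gft_le_gft) (auto simp: is_matching_def)
  thus ?thesis by (simp add: gft_def)
qed

definition hard_costs :: "real list" where "hard_costs = [0, 0, 1]"
definition hard_values :: "real list" where "hard_values = [1/2, 1/2, 1]"

lemma accepting_sellers_hard_costs:
  "accepting_sellers hard_costs p =
     (if 0 \<le> p then {0, 1} else {}) \<union> (if 1 \<le> p then {2} else {})"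
  unfolding accepting_sellers_def hard_costs_def
  by (auto simp: less_Suc_eq numeral_2_eq_2 intro: gr0I)

lemma accepting_buyers_hard_values:
  "accepting_buyers hard_values q =
     (if q \<le> 1/2 then {0, 1} else {}) \<union> (if q \<le> 1 then {2} else {})"
  unfolding accepting_buyers_def hard_values_def
  by (auto simp: less_Suc_eq numeral_2_eq_2 intro: gr0I)

lemma opt_gft_hard_instance: "3/2 \<le> opt_gft hard_costs hard_values"
proof -
  have "is_matching {..<length hard_costs} {..<length hard_values} {(0, 2), (1, 0)}"
    unfolding is_matching_def hard_costs_def hard_values_def by auto
  then have "gft hard_costs hard_values {(0, 2), (1, 0)} \<le> opt_gft hard_costs hard_values"
    by (rule gft_le_opt_gft)
  then show ?thesis by (simp add: gft_def hard_costs_def hard_values_def)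
qed

lemma round_gft_hard_instance:
  assumes "p \<le> q"
  shows "round_gft hard_costs hard_values p q \<le> 1"
proof -
  let ?S = "accepting_sellers hard_costs p" and ?B = "accepting_buyers hard_values q"
  let ?gft = "gft hard_costs hard_values"
  consider "p < 0 \<or> 1 < q"
    | "0 \<le> p" "p < 1" "q \<le> 1/2"
    | "0 \<le> p" "p < 1" "1/2 < q" "q \<le> 1"
    | "1 \<le> p" "q \<le> 1"
    by linarith
  then show ?thesis
  proof cases
    case 1
    then have "?S = {} \<or> ?B = {}"
      by (auto simp: accepting_sellers_hard_costs accepting_buyers_hard_values)
    then have "round_gft hard_costs hard_values p q \<le> 0" by (rule round_gft_le_0_if_no_trader)
    then show ?thesis by simp
  next
    case 2
    then have "?S = {0, 1}" "?B = {0, 1, 2}"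
      by (auto simp: accepting_sellers_hard_costs accepting_buyers_hard_values)
    then have "round_gft hard_costs hard_values p q \<le> ?gft {(0, 0), (1, 1)}"
      by (intro round_gft_le_gft) (auto simp: is_matching_def)
    then show ?thesis by (simp add: gft_def hard_costs_def hard_values_def)
  next
    case 3
    then have "?S = {0, 1}" "?B = {2}"
      by (auto simp: accepting_sellers_hard_costs accepting_buyers_hard_values)
    then have "round_gft hard_costs hard_values p q \<le> ?gft {(0, 2)}"
      by (intro round_gft_le_gft) (auto simp: is_matching_def)
    then show ?thesis by (simp add: gft_def hard_costs_def hard_values_def)
  next
    case 4
    then have "?S = {0, 1, 2}" "?B = {2}"
      using assms by (auto simp: accepting_sellers_hard_costs accepting_buyers_hard_values)
    then have "round_gft hard_costs hard_values p q \<le> ?gft {(2, 2)}"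
      by (intro round_gft_le_gft) (auto simp: is_matching_def)
    then show ?thesis by (simp add: gft_def hard_costs_def hard_values_def)
  qed
qed

lemma round_regret_hard_instance:
  assumes "p \<le> q"
  shows "1/2 \<le> round_regret hard_costs hard_values p q"
  using opt_gft_hard_instance round_gft_hard_instance[OF assms]
  unfolding round_regret_def by linarith

theorem theorem4p4:
  fixes T :: nat and A :: algorithm
  assumes "T \<ge> 1"
    and "\<forall>h. fst (A h) \<le> snd (A h)"
  shows "\<exists>cs vs. length cs = 3 \<and> length vs = 3 \<and>
           (\<forall>c\<in>set cs. 0 \<le> c \<and> c \<le> 1) \<and> (\<forall>v\<in>set vs. 0 \<le> v \<and> v \<le> 1) \<and>
           cumulative_regret A cs vs T \<ge> real T / 4"
proof (intro exI conjI)
  show "length hard_costs = 3" "length hard_values = 3"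
    "\<forall>c\<in>set hard_costs. 0 \<le> c \<and> c \<le> 1" "\<forall>v\<in>set hard_values. 0 \<le> v \<and> v \<le> 1"
    by (simp_all add: hard_costs_def hard_values_def)
  have "real T / 4 \<le> (\<Sum>t<T. 1/2)" by simp
  also have "\<dots> \<le> cumulative_regret A hard_costs hard_values T"
    unfolding cumulative_regret_def prices_def
    using assms(2) by (intro sum_mono round_regret_hard_instance) blast
  finally show "real T / 4 \<le> cumulative_regret A hard_costs hard_values T" .
qed

end
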